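(* Let $\Omega\subset\mathbb{R}$ be a bounded open interval and let $\varphi\in C^1(\overline\Omega)$ satisfy $\varphi>0$ in $\overline\Omega$. (i) For all $p>0$ and $q>0$, $$\int_\Omega\varphi^{-p}\le q^{\frac{2p}{q}}|\Omega|^{\frac{p+q}{q}}\Big\{\int_\Omega\varphi^{-q-2}\varphi_x^2\Big\}^{\frac pq}+2^{\frac{2p}{q}}|\Omega|^{p+1}\Big\{\int_\Omega\varphi\Big\}^{-p}.$$ (ii) The inequality $$-\int_\Omega\ln\varphi\le|\Omega|^{3/2}\Big\{\int_\Omega\frac{\varphi_x^2}{\varphi^2}\Big\}^{1/2}-|\Omega|\ln\Big\{\int_\Omega\varphi\Big\}+|\Omega|\ln|\Omega|$$ holds.
   Context: $|\Omega|$ denotes the length of $\Omega$. *)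

theory Defs
  imports "HOL-Analysis.Analysis"
begin

end

theory Submission
  imports Defs
begin

(* Both estimates rest on a one-dimensional Sobolev bound: for psi in C^1[a,b] and any two points,
   |psi x - psi c| <= sqrt ((b - a) * integral psi'^2), by the fundamental theorem of calculus and
   Cauchy-Schwarz. Choose c with phi c equal to the mean value of phi. For (i), apply the bound to
   psi = phi^(-q/2), for which psi'^2 = (q/2)^2 phi^(-q-2) phi'^2 and psi c = (mean of phi)^(-q/2),
   raise it to the power 2p/q using (A + B)^r <= 2^r (A^r + B^r), and integrate.
   For (ii), apply it to psi = -ln phi and integrate. *)

lemma integral_le_length_mult_real:
  fixes f :: "real \<Rightarrow> real"
  assumes "a \<le> b" "f integrable_on {a..b}" "\<And>x. x \<in> {a..b} \<Longrightarrow> f x \<le> C"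
  shows "integral {a..b} f \<le> (b - a) * C"
  using integral_le[OF assms(2) integrable_const_ivl, of C] assms by (simp add: mult.commute)

lemma integral_ge_length_mult_real:
  fixes f :: "real \<Rightarrow> real"
  assumes "a \<le> b" "f integrable_on {a..b}" "\<And>x. x \<in> {a..b} \<Longrightarrow> C \<le> f x"
  shows "(b - a) * C \<le> integral {a..b} f"
  using integral_le[OF integrable_const_ivl assms(2), of C] assms by (simp add: mult.commute)

lemma integral_mean_value_Icc:
  fixes f :: "real \<Rightarrow> real"
  assumes "a < b" and f: "continuous_on {a..b} f"
  obtains c where "c \<in> {a..b}" "integral {a..b} f = (b - a) * f c"
proof -
  have L: "b - a > 0"
    using \<open>a < b\<close> by simp
  have f_int: "f integrable_on {a..b}"
    using f by (rule integrable_continuous_interval)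
  obtain y where y: "y \<in> {a..b}" "\<And>x. x \<in> {a..b} \<Longrightarrow> f x \<le> f y"
    using continuous_attains_sup[OF compact_Icc _ f] \<open>a < b\<close> by auto
  obtain z where z: "z \<in> {a..b}" "\<And>x. x \<in> {a..b} \<Longrightarrow> f z \<le> f x"
    using continuous_attains_inf[OF compact_Icc _ f] \<open>a < b\<close> by auto
  define m where "m = integral {a..b} f / (b - a)"
  have "(b - a) * f z \<le> integral {a..b} f"
    using \<open>a < b\<close> f_int z(2) by (intro integral_ge_length_mult_real) auto
  then have "f z \<le> m"
    unfolding m_def using L by (intro mult_imp_le_div_pos) (simp_all add: mult.commute)
  have "integral {a..b} f \<le> (b - a) * f y"
    using \<open>a < b\<close> f_int y(2) by (intro integral_le_length_mult_real) auto
  then have "m \<le> f y"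
    unfolding m_def using L by (intro mult_imp_div_pos_le) (simp_all add: mult.commute)
  have "connected (f ` {a..b})"
    using connected_continuous_image[OF f] by simp
  then have "{f z..f y} \<subseteq> f ` {a..b}"
    using y(1) z(1) by (intro connected_contains_Icc) auto
  then obtain c where "c \<in> {a..b}" "f c = m"
    using \<open>f z \<le> m\<close> \<open>m \<le> f y\<close> by (metis atLeastAtMost_iff imageE subsetD)
  then show thesis
    using that L by (simp add: m_def)
qed

lemma Cauchy_Schwarz_integral_Icc:
  fixes g :: "real \<Rightarrow> real"
  assumes "a \<le> b" and g: "continuous_on {a..b} g"
  shows "(integral {a..b} g)\<^sup>2 \<le> (b - a) * integral {a..b} (\<lambda>x. (g x)\<^sup>2)"
proof (cases "a = b")
  case False
  define L where "L = b - a"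
  define m where "m = integral {a..b} g / L"
  have L: "L > 0" using \<open>a \<le> b\<close> False by (simp add: L_def)
  have "0 \<le> integral {a..b} (\<lambda>x. (g x - m)\<^sup>2)"
    using g by (auto intro!: integral_nonneg integrable_continuous_interval continuous_intros)
  also have "\<dots> = integral {a..b} (\<lambda>x. ((g x)\<^sup>2 - (2 * m) * g x) + m\<^sup>2)"
    by (simp add: power2_diff algebra_simps)
  also have "\<dots> = integral {a..b} (\<lambda>x. (g x)\<^sup>2) - integral {a..b} (\<lambda>x. 2 * m * g x) + L * m\<^sup>2"
    using \<open>a \<le> b\<close> g
    by (simp add: integral_add integral_diff integrable_continuous_interval continuous_intros L_def)
  also have "\<dots> = integral {a..b} (\<lambda>x. (g x)\<^sup>2) - 2 * m * integral {a..b} g + L * m\<^sup>2"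
    by simp
  also have "\<dots> = integral {a..b} (\<lambda>x. (g x)\<^sup>2) - (integral {a..b} g)\<^sup>2 / L"
    using L by (simp add: m_def field_simps power2_eq_square)
  finally have "(integral {a..b} g)\<^sup>2 / L \<le> integral {a..b} (\<lambda>x. (g x)\<^sup>2)"
    by simp
  then have "(integral {a..b} g)\<^sup>2 \<le> integral {a..b} (\<lambda>x. (g x)\<^sup>2) * L"
    using L by (simp add: pos_divide_le_eq)
  then show ?thesis
    by (metis L_def mult.commute)
qed simp

lemma abs_diff_le_integral_abs_deriv:
  fixes f f' :: "real \<Rightarrow> real"
  assumes f': "\<And>t. t \<in> {a..b} \<Longrightarrow> (f has_real_derivative f' t) (at t within {a..b})"
    and cont: "continuous_on {a..b} f'"
    and x: "x \<in> {a..b}" and y: "y \<in> {a..b}"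
  shows "\<bar>f x - f y\<bar> \<le> integral {a..b} (\<lambda>t. \<bar>f' t\<bar>)"
proof -
  have ordered: "\<bar>f v - f u\<bar> \<le> integral {a..b} (\<lambda>t. \<bar>f' t\<bar>)"
    if "u \<in> {a..b}" "v \<in> {a..b}" "u \<le> v" for u v
  proof -
    have sub: "{u..v} \<subseteq> {a..b}" using that by auto
    have "(f' has_integral (f v - f u)) {u..v}"
      using \<open>u \<le> v\<close> sub
      by (intro fundamental_theorem_of_calculus)
        (auto simp: has_real_derivative_iff_has_vector_derivative[symmetric]
          intro: has_field_derivative_subset[OF f'])
    then have "\<bar>f v - f u\<bar> = \<bar>integral {u..v} f'\<bar>"
      by (simp add: integral_unique)
    also have "\<dots> \<le> integral {u..v} (\<lambda>t. \<bar>f' t\<bar>)"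
      using integral_norm_bound_integral[of f' "{u..v}" "\<lambda>t. \<bar>f' t\<bar>"] continuous_on_subset[OF cont sub]
      by (auto intro: integrable_continuous_interval continuous_intros)
    also have "\<dots> \<le> integral {a..b} (\<lambda>t. \<bar>f' t\<bar>)"
      using sub cont
      by (intro integral_subset_le) (auto intro!: integrable_continuous_interval continuous_intros
          intro: continuous_on_subset)
    finally show ?thesis .
  qed
  show ?thesis
  proof (cases "x \<le> y")
    case True
    then show ?thesis
      using ordered[OF x y True] abs_minus_commute[of "f x" "f y"] by linarith
  next
    case False
    then show ?thesis
      using ordered[OF y x] by linarith
  qed
qed

lemma abs_diff_le_sqrt_integral_deriv_square:
  fixes f f' :: "real \<Rightarrow> real"
  assumes "a \<le> b"
    and f': "\<And>t. t \<in> {a..b} \<Longrightarrow> (f has_real_derivative f' t) (at t within {a..b})"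
    and cont: "continuous_on {a..b} f'"
    and "x \<in> {a..b}" "y \<in> {a..b}"
  shows "\<bar>f x - f y\<bar> \<le> sqrt ((b - a) * integral {a..b} (\<lambda>t. (f' t)\<^sup>2))"
proof -
  have "(integral {a..b} (\<lambda>t. \<bar>f' t\<bar>))\<^sup>2 \<le> (b - a) * integral {a..b} (\<lambda>t. (f' t)\<^sup>2)"
    using Cauchy_Schwarz_integral_Icc[OF \<open>a \<le> b\<close> continuous_on_rabs[OF cont]] by simp
  then have "integral {a..b} (\<lambda>t. \<bar>f' t\<bar>) \<le> sqrt ((b - a) * integral {a..b} (\<lambda>t. (f' t)\<^sup>2))"
    by (rule real_le_rsqrt)
  then show ?thesis
    using abs_diff_le_integral_abs_deriv[OF f' cont assms(4,5)] by linarith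
qed

lemma powr_add_le_two_powr:
  fixes A B r :: real
  assumes "0 \<le> A" "0 \<le> B" "0 \<le> r"
  shows "(A + B) powr r \<le> 2 powr r * (A powr r + B powr r)"
proof -
  have "(A + B) powr r \<le> (2 * max A B) powr r"
    using assms by (intro powr_mono2) auto
  also have "\<dots> = 2 powr r * max A B powr r"
    using assms by (simp add: powr_mult)
  also have "\<dots> \<le> 2 powr r * (A powr r + B powr r)"
    by (intro mult_left_mono) (auto simp: max_def)
  finally show ?thesis .
qed

context
  fixes a b :: real and \<phi> \<phi>' :: "real \<Rightarrow> real"
  assumes ab: "a < b"
    and deriv: "\<And>x. x \<in> {a..b} \<Longrightarrow> (\<phi> has_real_derivative \<phi>' x) (at x within {a..b})"
    and cont_deriv: "continuous_on {a..b} \<phi>'"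
    and pos: "\<And>x. x \<in> {a..b} \<Longrightarrow> \<phi> x > 0"
begin

lemma integral_powr_neg_le:
  assumes p: "p > 0" and q: "q > 0"
  shows "integral {a..b} (\<lambda>x. \<phi> x powr (-p))
    \<le> q powr (2*p/q) * (b - a) powr ((p+q)/q)
        * (integral {a..b} (\<lambda>x. \<phi> x powr (-q-2) * (\<phi>' x)^2)) powr (p/q)
      + 2 powr (2*p/q) * (b - a) powr (p+1) * (integral {a..b} \<phi>) powr (-p)"
proof -
  define L where "L = b - a"
  define I where "I = integral {a..b} \<phi>"
  define J where "J = integral {a..b} (\<lambda>x. \<phi> x powr (-q-2) * (\<phi>' x)^2)"
  define r where "r = 2*p/q"
  have L: "L > 0" and r: "r > 0"
    using ab p q by (simp_all add: L_def r_def)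
  have cont: "continuous_on {a..b} \<phi>"
    using deriv by (rule DERIV_continuous_on)
  obtain c where c: "c \<in> {a..b}" and I_eq: "I = L * \<phi> c"
    using integral_mean_value_Icc[OF ab cont] unfolding I_def L_def by blast
  have I: "I > 0"
    using I_eq L pos[OF c] by simp
  have nonzero: "\<phi> x \<noteq> 0" if "x \<in> {a..b}" for x
    using pos[OF that] by simp
  define \<psi>' where "\<psi>' x = -q/2 * \<phi> x powr (-q/2-1) * \<phi>' x" for x
  have \<psi>_deriv: "((\<lambda>x. \<phi> x powr (-q/2)) has_real_derivative \<psi>' x) (at x within {a..b})"
    if "x \<in> {a..b}" for x
    unfolding \<psi>'_def using deriv[OF that] pos[OF that] by (auto intro!: derivative_eq_intros)
  have \<psi>'_cont: "continuous_on {a..b} \<psi>'"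
    unfolding \<psi>'_def using nonzero by (auto intro!: continuous_intros cont cont_deriv)
  have "(\<psi>' x)^2 = (q/2)^2 * (\<phi> x powr (-q-2) * (\<phi>' x)^2)" for x
  proof -
    have "(\<phi> x powr (-q/2-1))^2 = \<phi> x powr (-q-2)"
      unfolding power2_eq_square powr_add[symmetric] by simp
    then show ?thesis
      unfolding \<psi>'_def by (simp add: power_mult_distrib power_divide)
  qed
  then have \<psi>'_energy: "integral {a..b} (\<lambda>x. (\<psi>' x)^2) = (q/2)^2 * J"
    by (simp add: J_def)
  have J: "J \<ge> 0"
    unfolding J_def using nonzero
    by (auto intro!: integral_nonneg integrable_continuous_interval continuous_intros cont cont_deriv)
  define A where "A = q/2 * sqrt (L * J)"
  define B where "B = (I/L) powr (-q/2)"
  have A: "A \<ge> 0" and B: "B \<ge> 0"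
    using q L J by (simp_all add: A_def B_def)
  have pointwise: "\<phi> x powr (-p) \<le> 2 powr r * A powr r + 2 powr r * B powr r" if x: "x \<in> {a..b}" for x
  proof -
    have "\<phi> x powr (-q/2) - \<phi> c powr (-q/2) \<le> sqrt (L * ((q/2)^2 * J))"
      using abs_diff_le_sqrt_integral_deriv_square[OF less_imp_le[OF ab] \<psi>_deriv \<psi>'_cont x c]
      unfolding \<psi>'_energy L_def by linarith
    also have "sqrt (L * ((q/2)^2 * J)) = A"
      using q by (simp add: A_def real_sqrt_mult ac_simps)
    finally have "\<phi> x powr (-q/2) \<le> A + B"
      using I_eq L by (simp add: B_def)
    have "\<phi> x powr (-p) = (\<phi> x powr (-q/2)) powr r"
      using q by (simp add: powr_powr r_def)
    also have "\<dots> \<le> (A + B) powr r"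
      using \<open>\<phi> x powr (-q/2) \<le> A + B\<close> r by (intro powr_mono2) auto
    also have "\<dots> \<le> 2 powr r * (A powr r + B powr r)"
      using A B r by (intro powr_add_le_two_powr) auto
    finally show ?thesis
      by (simp add: distrib_left)
  qed
  have integral_le: "integral {a..b} (\<lambda>x. \<phi> x powr (-p)) \<le> L * (2 powr r * A powr r + 2 powr r * B powr r)"
    using ab nonzero pointwise unfolding L_def
    by (intro integral_le_length_mult_real integrable_continuous_interval)
      (auto intro!: continuous_intros cont)
  have "2 powr r * A powr r = (q * sqrt (L * J)) powr r"
    using A by (simp add: A_def powr_mult[symmetric])
  also have "\<dots> = q powr r * L powr (p/q) * J powr (p/q)"
    using q L J by (simp add: powr_mult powr_half_sqrt[symmetric] powr_powr r_def)
  finally have A_powr: "2 powr r * A powr r = q powr r * L powr (p/q) * J powr (p/q)" .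
  have B_powr: "B powr r = L powr p * I powr (-p)"
    using q I L by (simp add: B_def powr_powr r_def powr_divide powr_minus divide_simps)
  have "L powr ((p+q)/q) = L powr (p/q) * L" and "L powr (p+1) = L powr p * L"
    using q L by (simp_all add: add_divide_distrib powr_add)
  then have "L * (2 powr r * A powr r + 2 powr r * B powr r)
      = q powr r * L powr ((p+q)/q) * J powr (p/q) + 2 powr r * L powr (p+1) * I powr (-p)"
    unfolding A_powr B_powr by (simp add: algebra_simps)
  with integral_le show ?thesis
    unfolding L_def I_def J_def r_def by linarith
qed

lemma integral_neg_ln_le:
  "- integral {a..b} (\<lambda>x. ln (\<phi> x))
    \<le> (b - a) powr (3/2) * (integral {a..b} (\<lambda>x. (\<phi>' x)^2 / (\<phi> x)^2)) powr (1/2)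
      - (b - a) * ln (integral {a..b} \<phi>) + (b - a) * ln (b - a)"
proof -
  define L where "L = b - a"
  define I where "I = integral {a..b} \<phi>"
  define K where "K = integral {a..b} (\<lambda>x. (\<phi>' x)^2 / (\<phi> x)^2)"
  have L: "L > 0"
    using ab by (simp add: L_def)
  have cont: "continuous_on {a..b} \<phi>"
    using deriv by (rule DERIV_continuous_on)
  obtain c where c: "c \<in> {a..b}" and I_eq: "I = L * \<phi> c"
    using integral_mean_value_Icc[OF ab cont] unfolding I_def L_def by blast
  have nonzero: "\<phi> x \<noteq> 0" if "x \<in> {a..b}" for x
    using pos[OF that] by simp
  define \<psi>' where "\<psi>' x = - (\<phi>' x / \<phi> x)" for x
  have \<psi>_deriv: "((\<lambda>x. - ln (\<phi> x)) has_real_derivative \<psi>' x) (at x within {a..b})"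
    if "x \<in> {a..b}" for x
    unfolding \<psi>'_def using deriv[OF that] pos[OF that]
    by (auto intro!: derivative_eq_intros simp: field_simps)
  have \<psi>'_cont: "continuous_on {a..b} \<psi>'"
    unfolding \<psi>'_def using nonzero by (auto intro!: continuous_intros cont cont_deriv)
  have \<psi>'_energy: "integral {a..b} (\<lambda>x. (\<psi>' x)^2) = K"
    by (simp add: K_def \<psi>'_def power_divide)
  have K: "K \<ge> 0"
    unfolding K_def using nonzero
    by (auto intro!: integral_nonneg integrable_continuous_interval continuous_intros cont cont_deriv)
  have pointwise: "- ln (\<phi> x) \<le> sqrt (L * K) - ln I + ln L" if x: "x \<in> {a..b}" for x
  proof -
    have "- ln (\<phi> x) - - ln (\<phi> c) \<le> sqrt (L * K)"
      using abs_diff_le_sqrt_integral_deriv_square[OF less_imp_le[OF ab] \<psi>_deriv \<psi>'_cont x c]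
      unfolding \<psi>'_energy L_def by linarith
    moreover have "ln (\<phi> c) = ln I - ln L"
      using I_eq L pos[OF c] by (simp add: ln_mult)
    ultimately show ?thesis
      by linarith
  qed
  have "- integral {a..b} (\<lambda>x. ln (\<phi> x)) = integral {a..b} (\<lambda>x. - ln (\<phi> x))"
    by (simp add: integral_neg)
  also have "\<dots> \<le> L * (sqrt (L * K) - ln I + ln L)"
    using ab nonzero pointwise unfolding L_def
    by (intro integral_le_length_mult_real integrable_continuous_interval)
      (auto intro!: continuous_intros cont)
  also have "\<dots> = L powr (3/2) * K powr (1/2) - L * ln I + L * ln L"
  proof -
    have "L powr (3/2) = L * sqrt L"
      using L powr_add[of L 1 "1/2"] by (simp add: powr_half_sqrt)
    then show ?thesis
      using K L by (simp add: powr_half_sqrt real_sqrt_mult algebra_simps)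
  qed
  finally show ?thesis
    unfolding L_def I_def K_def .
qed

end

theorem lemma5p1:
  fixes a b :: real and \<phi> \<phi>' :: "real \<Rightarrow> real"
  assumes ab: "a < b"
    and deriv: "\<And>x. x \<in> {a..b} \<Longrightarrow> (\<phi> has_real_derivative \<phi>' x) (at x within {a..b})"
    and cont_deriv: "continuous_on {a..b} \<phi>'"
    and pos: "\<And>x. x \<in> {a..b} \<Longrightarrow> \<phi> x > 0"
  shows "(\<forall>p q :: real. p > 0 \<longrightarrow> q > 0 \<longrightarrow>
            integral {a<..<b} (\<lambda>x. \<phi> x powr (-p))
              \<le> q powr (2*p/q) * (b - a) powr ((p+q)/q)
                  * (integral {a<..<b} (\<lambda>x. \<phi> x powr (-q-2) * (\<phi>' x)^2)) powr (p/q)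
                + 2 powr (2*p/q) * (b - a) powr (p+1)
                  * (integral {a<..<b} \<phi>) powr (-p))
         \<and> - integral {a<..<b} (\<lambda>x. ln (\<phi> x))
             \<le> (b - a) powr (3/2) * (integral {a<..<b} (\<lambda>x. (\<phi>' x)^2 / (\<phi> x)^2)) powr (1/2)
               - (b - a) * ln (integral {a<..<b} \<phi>) + (b - a) * ln (b - a)"
  unfolding integral_open_interval_real[symmetric]
  by (intro conjI allI impI integral_powr_neg_le[OF assms] integral_neg_ln_le[OF assms])

end
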